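(* Let $P,Q,R\in D_P$ be three points not lying on a common hyperbolic line, and let $m\in\mathbb{Z}_{\ge 0}$ be the number of ideal triangles circumscribing $\triangle PQR$. Let $h$ be the hyperbolic length of the perpendicular geodesic segment from $R$ to the hyperbolic line through $P$ and $Q$. Then $$m=\begin{cases}0 & \text{if } h<\Delta(P,Q),\\ 1 & \text{if } h=\Delta(P,Q),\\ 2 & \text{if } h>\Delta(P,Q).\end{cases}$$
   Context: $D_P=\{z\in\mathbb{C}:|z|<1\}$ is the Poincaré disk with metric $ds^2=4\frac{dx^2+dy^2}{(1-x^2-y^2)^2}$, and $S^1=\{|z|=1\}$ is its boundary at infinity. Hyperbolic lines are arcs of circles or diameters orthogonal to $S^1$. The hyperbolic distance is $d(P,Q)=\operatorname{arccosh}\left(1+\frac{2|P-Q|^2}{(1-|P|^2)(1-|Q|^2)}\right)$, and $\Delta(P,Q):=\log\frac{e^{d(P,Q)}+1}{e^{d(P,Q)}-1}=\log\coth\frac{d(P,Q)}{2}$. An ideal triangle circumscribing $\triangle PQR$ (a "triangle inscribed in $S^1$ and circumscribing $\triangle PQR$") is a triangle whose three vertices are distinct points of $S^1$ and whose sides are hyperbolic lines joining them, such that $P$, $Q$, $R$ lie on three distinct sides (one point on each side). *)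

theory Defs
  imports Complex_Main
begin

definition disk :: "complex set" where
  "disk = {z. cmod z < 1}"

definition circle_at_infinity :: "complex set" where
  "circle_at_infinity = {z. cmod z = 1}"

definition orth_gcircle :: "complex set \<Rightarrow> bool" where
  "orth_gcircle C \<longleftrightarrow>
     (\<exists>c r. r > 0 \<and> cmod c ^ 2 = 1 + r ^ 2 \<and> C = {z. cmod (z - c) = r}) \<or>
     (\<exists>n. n \<noteq> 0 \<and> C = {z. Re (cnj n * z) = 0})"

definition hyp_line :: "complex set \<Rightarrow> bool" where
  "hyp_line L \<longleftrightarrow> (\<exists>C. orth_gcircle C \<and> L = C \<inter> disk)"

definition hyp_line_joining :: "complex \<Rightarrow> complex \<Rightarrow> complex set \<Rightarrow> bool" where
  "hyp_line_joining a b L \<longleftrightarrow> (\<exists>C. orth_gcircle C \<and> a \<in> C \<and> b \<in> C \<and> L = C \<inter> disk)"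

definition hdist :: "complex \<Rightarrow> complex \<Rightarrow> real" where
  "hdist P Q = arcosh (1 + 2 * cmod (P - Q) ^ 2 / ((1 - cmod P ^ 2) * (1 - cmod Q ^ 2)))"

definition Delta :: "complex \<Rightarrow> complex \<Rightarrow> real" where
  "Delta P Q = ln ((exp (hdist P Q) + 1) / (exp (hdist P Q) - 1))"

definition circumscribing_ideal_triangle ::
  "complex set \<Rightarrow> complex \<Rightarrow> complex \<Rightarrow> complex \<Rightarrow> bool" where
  "circumscribing_ideal_triangle T P Q R \<longleftrightarrow>
     (\<exists>a b c. T = {a, b, c} \<and> a \<noteq> b \<and> b \<noteq> c \<and> a \<noteq> c \<and>
        a \<in> circle_at_infinity \<and> b \<in> circle_at_infinity \<and> c \<in> circle_at_infinity \<and>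
        (\<exists>Lab Lbc Lca. hyp_line_joining a b Lab \<and> hyp_line_joining b c Lbc \<and>
           hyp_line_joining c a Lca \<and> P \<in> Lab \<and> Q \<in> Lbc \<and> R \<in> Lca))"

text \<open>Hyperbolic distance from a point to a set (for a hyperbolic line: the length
  of the perpendicular geodesic segment).\<close>
definition hdist_set :: "complex \<Rightarrow> complex set \<Rightarrow> real" where
  "hdist_set R L = Inf (hdist R ` L)"

end

theory Submission
  imports Defs
begin

text \<open>
  A Moebius map of the disk onto the right half-plane sends the line PQ to the positive real
  axis, P and Q to real points p and q, and R to a point w off the axis. Geodesics become
  semicircles centred on the imaginary axis, so an ideal triangle with vertices at the chart
  coordinates \<i>\<alpha>, \<i>\<beta>, \<i>\<gamma> circumscribes PQR iff p^2 + \<alpha>\<beta> = 0, q^2 + \<beta>\<gamma> = 0 and w lies on the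
  semicircle through \<i>\<gamma> and \<i>\<alpha>. Writing \<beta> = pq/t, these conditions say exactly that t is a root of
  t^2 + 2 cosh d(P,Q) (Im w) t + |w|^2 = 0, and distinct roots give distinct triangles.
  The discriminant compares (cosh d(P,Q) Im w)^2 with |w|^2; since the distance from w to the
  real axis is arcosh (|w| / Re w) and cosh \<Delta>(P,Q) = coth d(P,Q), this is the comparison of
  h with \<Delta>(P,Q).
\<close>

lemma card_quadratic_roots:
  fixes K W :: real
  assumes "W > 0"
  shows "finite {t. t^2 + 2*K*t + W = 0} \<and>
    card {t. t^2 + 2*K*t + W = 0} = (if K^2 < W then 0 else if K^2 = W then 1 else 2)"
proof -
  have completed_square: "t^2 + 2*K*t + W = 0 \<longleftrightarrow> (t + K)^2 = K^2 - W" for t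
    by (simp add: power2_eq_square algebra_simps)
  consider "K^2 < W" | "K^2 = W" | "K^2 > W" by linarith
  then show ?thesis
  proof cases
    case 1
    then have "{t. t^2 + 2*K*t + W = 0} = {}"
      unfolding completed_square by (smt (verit) empty_Collect_eq zero_le_power2)
    with 1 show ?thesis by simp
  next
    case 2
    then have "{t. t^2 + 2*K*t + W = 0} = {-K}" unfolding completed_square by auto
    with 2 show ?thesis by simp
  next
    case 3
    define s where "s = sqrt (K^2 - W)"
    have "s > 0" and s_sq: "s^2 = K^2 - W" unfolding s_def using 3 by simp_all
    have "(t + K)^2 = s^2 \<longleftrightarrow> t = -K + s \<or> t = -K - s" for t
      using power2_eq_iff[of "t + K" s] by auto
    then have "{t. t^2 + 2*K*t + W = 0} = {-K + s, -K - s}"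
      unfolding completed_square s_sq[symmetric] by auto
    with 3 \<open>s > 0\<close> show ?thesis by simp
  qed
qed

lemma quadratic_roots_product:
  fixes K W t1 t2 :: real
  assumes "t1^2 + 2*K*t1 + W = 0" "t2^2 + 2*K*t2 + W = 0" "t1 \<noteq> t2"
  shows "t1 * t2 = W"
proof -
  have "(t1 - t2) * (t1 + t2 + 2*K) = 0"
    using assms(1,2) by (simp add: power2_eq_square algebra_simps)
  then have "t2 = - t1 - 2*K" using assms(3) by simp
  then have "t1 * t2 = - (t1^2 + 2*K*t1)" by algebra
  with assms(1) show ?thesis by simp
qed

lemma ideal_coordinates_iff_quadratic:
  fixes p q W y \<alpha> \<beta> \<gamma> :: real
  assumes p: "p > 0" and q: "q > 0" and W: "W > 0"
  shows "(p^2 + \<alpha> * \<beta> = 0 \<and> q^2 + \<beta> * \<gamma> = 0 \<and> W - (\<gamma> + \<alpha>) * y + \<gamma> * \<alpha> = 0) \<longleftrightarrow>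
    (\<exists>t. t^2 + 2 * ((p^2 + q^2) / (2 * p * q) * y) * t + W = 0 \<and>
         \<alpha> = - p * t / q \<and> \<beta> = p * q / t \<and> \<gamma> = - q * t / p)"
proof
  assume eqs: "p^2 + \<alpha> * \<beta> = 0 \<and> q^2 + \<beta> * \<gamma> = 0 \<and> W - (\<gamma> + \<alpha>) * y + \<gamma> * \<alpha> = 0"
  then have "\<beta> \<noteq> 0" using p by auto
  define t where "t = p * q / \<beta>"
  have \<alpha>: "\<alpha> = - p * t / q"
    unfolding t_def using eqs \<open>\<beta> \<noteq> 0\<close> q by (simp add: field_simps power2_eq_square)
  have \<gamma>: "\<gamma> = - q * t / p"
    unfolding t_def using eqs \<open>\<beta> \<noteq> 0\<close> p by (simp add: field_simps power2_eq_square)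
  have \<beta>: "\<beta> = p * q / t" unfolding t_def using p q by simp
  have "t^2 + 2 * ((p^2 + q^2) / (2 * p * q) * y) * t + W = W - (\<gamma> + \<alpha>) * y + \<gamma> * \<alpha>"
    unfolding \<alpha> \<gamma> using p q by (simp add: field_simps power2_eq_square)
  then have "t^2 + 2 * ((p^2 + q^2) / (2 * p * q) * y) * t + W = 0" using eqs by simp
  then show "\<exists>t. t^2 + 2 * ((p^2 + q^2) / (2 * p * q) * y) * t + W = 0 \<and>
      \<alpha> = - p * t / q \<and> \<beta> = p * q / t \<and> \<gamma> = - q * t / p"
    using \<alpha> \<beta> \<gamma> by blast
next
  assume "\<exists>t. t^2 + 2 * ((p^2 + q^2) / (2 * p * q) * y) * t + W = 0 \<and>
      \<alpha> = - p * t / q \<and> \<beta> = p * q / t \<and> \<gamma> = - q * t / p"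
  then obtain t where root: "t^2 + 2 * ((p^2 + q^2) / (2 * p * q) * y) * t + W = 0"
    and coords: "\<alpha> = - p * t / q" "\<beta> = p * q / t" "\<gamma> = - q * t / p" by blast
  have "t \<noteq> 0" using root W by auto
  have "W - (\<gamma> + \<alpha>) * y + \<gamma> * \<alpha> = t^2 + 2 * ((p^2 + q^2) / (2 * p * q) * y) * t + W"
    unfolding coords using p q by (simp add: field_simps power2_eq_square)
  then show "p^2 + \<alpha> * \<beta> = 0 \<and> q^2 + \<beta> * \<gamma> = 0 \<and> W - (\<gamma> + \<alpha>) * y + \<gamma> * \<alpha> = 0"
    unfolding coords using root \<open>t \<noteq> 0\<close> p q by (simp add: field_simps power2_eq_square)
qed

definition log_coth_half :: "real \<Rightarrow> real" where
  "log_coth_half d = ln ((exp d + 1) / (exp d - 1))"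

lemma Delta_eq_log_coth_half: "Delta P Q = log_coth_half (hdist P Q)"
  unfolding Delta_def log_coth_half_def ..

lemma log_coth_half_pos:
  assumes "d > 0"
  shows "log_coth_half d > 0"
proof -
  have "exp d > 1" using assms by simp
  then have "(exp d + 1) / (exp d - 1) > 1" by simp
  then show ?thesis unfolding log_coth_half_def by simp
qed

lemma cosh_log_coth_half:
  assumes "d > 0"
  shows "cosh (log_coth_half d) = cosh d / sinh d"
proof -
  define E where "E = exp d"
  have E: "E > 1" unfolding E_def using assms by simp
  have "cosh (log_coth_half d) = ((E + 1) / (E - 1) + (E - 1) / (E + 1)) / 2"
    unfolding log_coth_half_def E_def[symmetric] using E by (simp add: cosh_ln_real)
  also have "\<dots> = ((E + inverse E) / 2) / ((E - inverse E) / 2)"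
    using E less_1_mult[OF E E] by (simp add: field_simps)
  also have "\<dots> = cosh d / sinh d"
    unfolding cosh_field_def sinh_field_def E_def exp_minus ..
  finally show ?thesis .
qed

lemma arcosh_vs_log_coth_half:
  fixes r d :: real
  assumes r: "r \<ge> 1" and d: "d > 0"
  shows "arcosh r < log_coth_half d \<longleftrightarrow> r * sinh d < cosh d"
    and "arcosh r = log_coth_half d \<longleftrightarrow> r * sinh d = cosh d"
proof -
  define D where "D = log_coth_half d"
  have D: "D \<ge> 0" unfolding D_def using log_coth_half_pos[OF d] by simp
  have sinh: "sinh d > 0" using d by simp
  have "arcosh r < D \<longleftrightarrow> r < cosh D"
    using cosh_real_nonneg_less_iff[OF arcosh_nonneg_real[OF r] D] cosh_arcosh_real[OF r] by simp
  then show "arcosh r < log_coth_half d \<longleftrightarrow> r * sinh d < cosh d"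
    unfolding D_def cosh_log_coth_half[OF d] using sinh by (simp add: pos_less_divide_eq)
  have "arcosh r = D \<longleftrightarrow> r = cosh D"
    using cosh_arcosh_real[OF r] arcosh_cosh_real[OF D] by auto
  then show "arcosh r = log_coth_half d \<longleftrightarrow> r * sinh d = cosh d"
    unfolding D_def cosh_log_coth_half[OF d] using sinh by (simp add: eq_divide_eq)
qed

text \<open>The hyperbolic distance from w to the positive real axis in the right half-plane model
  is arcosh (cmod w / Re w).\<close>
lemma arcosh_cmod_div_Re_vs_log_coth_half:
  fixes w :: complex and d :: real
  assumes w: "Re w > 0" and d: "d > 0"
  shows "arcosh (cmod w / Re w) < log_coth_half d \<longleftrightarrow> (cosh d * Im w)^2 < cmod w ^ 2"
    and "arcosh (cmod w / Re w) = log_coth_half d \<longleftrightarrow> (cosh d * Im w)^2 = cmod w ^ 2"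
proof -
  define r where "r = cmod w / Re w"
  have r: "r \<ge> 1" unfolding r_def using w complex_Re_le_cmod[of w] by simp
  have nonneg: "r * sinh d \<ge> 0" "cosh d \<ge> 0" using r d by simp_all
  have "Re w ^ 2 * (r * sinh d)^2 = cmod w ^ 2 * (sinh d)^2"
    unfolding r_def using w by (simp add: power_mult_distrib power_divide)
  then have squares: "Re w ^ 2 * ((r * sinh d)^2 - (cosh d)^2) = (cosh d * Im w)^2 - cmod w ^ 2"
    using cosh_square_eq[of d] cmod_power2[of w] by (simp add: algebra_simps)
  have "Re w ^ 2 > 0" using w by simp
  have "r * sinh d < cosh d \<longleftrightarrow> (r * sinh d)^2 < (cosh d)^2"
    using nonneg power_mono_iff[of "cosh d" "r * sinh d" 2] by (auto simp: not_le[symmetric])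
  also have "\<dots> \<longleftrightarrow> Re w ^ 2 * ((r * sinh d)^2 - (cosh d)^2) < 0"
    using \<open>Re w ^ 2 > 0\<close> by (simp add: mult_less_0_iff)
  finally have "r * sinh d < cosh d \<longleftrightarrow> (cosh d * Im w)^2 < cmod w ^ 2" unfolding squares by simp
  then show "arcosh (cmod w / Re w) < log_coth_half d \<longleftrightarrow> (cosh d * Im w)^2 < cmod w ^ 2"
    using arcosh_vs_log_coth_half(1)[OF r d] unfolding r_def by simp
  have "r * sinh d = cosh d \<longleftrightarrow> Re w ^ 2 * ((r * sinh d)^2 - (cosh d)^2) = 0"
    using nonneg \<open>Re w ^ 2 > 0\<close> by simp
  then have "r * sinh d = cosh d \<longleftrightarrow> (cosh d * Im w)^2 = cmod w ^ 2" unfolding squares by simp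
  then show "arcosh (cmod w / Re w) = log_coth_half d \<longleftrightarrow> (cosh d * Im w)^2 = cmod w ^ 2"
    using arcosh_vs_log_coth_half(2)[OF r d] unfolding r_def by simp
qed

lemma hdist_pos:
  assumes "P \<in> disk" "Q \<in> disk" "P \<noteq> Q"
  shows "hdist P Q > 0"
proof -
  have "cmod P ^ 2 < 1" "cmod Q ^ 2 < 1"
    using assms(1,2) unfolding disk_def by (simp_all add: power_less_one_iff)
  then show ?thesis unfolding hdist_def using assms(3) by simp
qed

section \<open>Generalised circles as zero sets of Hermitian forms\<close>

definition herm_form :: "real \<Rightarrow> complex \<Rightarrow> real \<Rightarrow> complex \<Rightarrow> real" where
  "herm_form A W D z = A * (cmod z)^2 - 2 * Re (cnj W * z) + D"

lemma herm_form_scale: "herm_form (s * A) (of_real s * W) (s * A) z = s * herm_form A W A z"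
  unfolding herm_form_def by (simp add: algebra_simps)

lemma herm_form_linear_eq_0: "herm_form 0 W 0 z = 0 \<longleftrightarrow> Re (cnj W * z) = 0"
proof -
  have "herm_form 0 W 0 z = - 2 * Re (cnj W * z)" unfolding herm_form_def by simp
  then show ?thesis by (simp only:) linarith
qed

lemma herm_form_unit: "cmod a = 1 \<Longrightarrow> herm_form A W A a = 2 * A - 2 * (Re W * Re a + Im W * Im a)"
  unfolding herm_form_def by simp

lemma cmod_diff_power2: "cmod (z - c) ^ 2 = cmod z ^ 2 - 2 * Re (cnj c * z) + cmod c ^ 2"
  unfolding cmod_power2 by (simp add: power2_eq_square algebra_simps)

lemma orth_gcircle_herm_form:
  assumes "orth_gcircle C"
  obtains A W where "\<bar>A\<bar> < cmod W" "C = {z. herm_form A W A z = 0}"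
  using assms unfolding orth_gcircle_def
proof
  assume "\<exists>c r. r > 0 \<and> cmod c ^ 2 = 1 + r ^ 2 \<and> C = {z. cmod (z - c) = r}"
  then obtain c r where r: "r > 0" "cmod c ^ 2 = 1 + r ^ 2" and C: "C = {z. cmod (z - c) = r}"
    by blast
  have "1 ^ 2 < cmod c ^ 2" using r by simp
  then have "1 < cmod c" by (rule power_less_imp_less_base) simp
  moreover have "cmod (z - c) = r \<longleftrightarrow> herm_form 1 c 1 z = 0" for z
  proof -
    have "cmod (z - c) ^ 2 = herm_form 1 c 1 z + r ^ 2"
      unfolding cmod_diff_power2 herm_form_def r(2) by simp
    moreover have "cmod (z - c) = r \<longleftrightarrow> cmod (z - c) ^ 2 = r ^ 2" using r(1) by simp
    ultimately show ?thesis by simp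
  qed
  ultimately show thesis using that[of 1 c] C by simp
next
  assume "\<exists>n. n \<noteq> 0 \<and> C = {z. Re (cnj n * z) = 0}"
  then obtain n where "n \<noteq> 0" "C = {z. Re (cnj n * z) = 0}" by blast
  then show thesis using that[of 0 n] unfolding herm_form_linear_eq_0 by auto
qed

lemma orth_gcircle_herm_form_zeros:
  assumes "\<bar>A\<bar> < cmod W"
  shows "orth_gcircle {z. herm_form A W A z = 0}"
proof (cases "A = 0")
  case True
  then have "{z. herm_form A W A z = 0} = {z. Re (cnj W * z) = 0}"
    by (simp add: herm_form_linear_eq_0)
  moreover have "W \<noteq> 0" using assms by auto
  ultimately show ?thesis unfolding orth_gcircle_def by blast
next
  case False
  define c where "c = W / of_real A"
  have "cmod c = cmod W / \<bar>A\<bar>" unfolding c_def by (simp add: norm_divide)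
  then have "1 < cmod c" using assms False by simp
  then have c_sq: "1 < cmod c ^ 2" by (simp add: less_1_mult power2_eq_square)
  define r where "r = sqrt (cmod c ^ 2 - 1)"
  have r: "r > 0" "r ^ 2 = cmod c ^ 2 - 1" unfolding r_def using c_sq by simp_all
  have "cnj W = of_real A * cnj c" unfolding c_def using False by simp
  then have Re_W: "A * Re (cnj c * z) = Re (cnj W * z)" for z
    by (simp add: algebra_simps)
  have "cmod (z - c) = r \<longleftrightarrow> herm_form A W A z = 0" for z
  proof -
    have "A * (cmod (z - c) ^ 2 - r ^ 2) = herm_form A W A z"
      unfolding cmod_diff_power2 herm_form_def r(2) Re_W[symmetric] by (simp add: algebra_simps)
    moreover have "cmod (z - c) = r \<longleftrightarrow> A * (cmod (z - c) ^ 2 - r ^ 2) = 0"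
      using r(1) False by simp
    ultimately show ?thesis by simp
  qed
  then have "{z. herm_form A W A z = 0} = {z. cmod (z - c) = r}" by auto
  moreover have "cmod c ^ 2 = 1 + r ^ 2" using r(2) by simp
  ultimately show ?thesis
    unfolding orth_gcircle_def by (intro disjI1 exI[of _ c] exI[of _ r]) (simp add: r(1))
qed

lemma herm_form_two_ideal_zeros:
  assumes "cmod a = 1" "cmod b = 1" "a \<noteq> b" "herm_form A W A a = 0" "herm_form A W A b = 0"
  obtains s where "A = s * Im (cnj a * b)" "W = of_real s * (\<i> * (a - b))"
proof -
  define d1 d2 where "d1 = Re a - Re b" and "d2 = Im a - Im b"
  define N where "N = d1^2 + d2^2"
  have "d1 \<noteq> 0 \<or> d2 \<noteq> 0" using assms(3) unfolding d1_def d2_def by (auto simp: complex_eq_iff)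
  then have "N > 0" unfolding N_def by (simp add: sum_power2_gt_zero_iff)
  have A_a: "Re W * Re a + Im W * Im a = A" and A_b: "Re W * Re b + Im W * Im b = A"
    using assms(4,5) herm_form_unit[OF assms(1)] herm_form_unit[OF assms(2)] by simp_all
  then have orth: "Re W * d1 + Im W * d2 = 0" unfolding d1_def d2_def by (simp add: algebra_simps)
  define s where "s = (Im W * d1 - Re W * d2) / N"
  have sN: "s * N = Im W * d1 - Re W * d2" unfolding s_def using \<open>N > 0\<close> by simp
  have "Re W * N + s * N * d2 = d1 * (Re W * d1 + Im W * d2)"
    unfolding sN unfolding N_def by (simp add: power2_eq_square algebra_simps)
  then have "N * (Re W + s * d2) = 0" unfolding orth by (simp add: algebra_simps)
  then have Re_W: "Re W = - s * d2" using \<open>N > 0\<close> by simp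
  have "Im W * N - s * N * d1 = d2 * (Re W * d1 + Im W * d2)"
    unfolding sN unfolding N_def by (simp add: power2_eq_square algebra_simps)
  then have "N * (Im W - s * d1) = 0" unfolding orth by (simp add: algebra_simps)
  then have Im_W: "Im W = s * d1" using \<open>N > 0\<close> by simp
  have "A = Re W * Re a + Im W * Im a" using A_a by simp
  also have "\<dots> = s * Im (cnj a * b)"
    unfolding Re_W Im_W d1_def d2_def by (simp add: algebra_simps)
  finally have "A = s * Im (cnj a * b)" .
  moreover have "W = of_real s * (\<i> * (a - b))"
    using Re_W Im_W unfolding complex_eq_iff d1_def d2_def by (simp add: algebra_simps)
  ultimately show thesis by (rule that)
qed

definition geodesic :: "complex \<Rightarrow> complex \<Rightarrow> complex set" where
  "geodesic a b = {z \<in> disk. herm_form (Im (cnj a * b)) (\<i> * (a - b)) (Im (cnj a * b)) z = 0}"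

lemma geodesic_form_endpoints:
  assumes "cmod a = 1" "cmod b = 1"
  shows "herm_form (Im (cnj a * b)) (\<i> * (a - b)) (Im (cnj a * b)) a = 0"
    and "herm_form (Im (cnj a * b)) (\<i> * (a - b)) (Im (cnj a * b)) b = 0"
  unfolding herm_form_unit[OF assms(1)] herm_form_unit[OF assms(2)]
  by (simp_all add: algebra_simps)

lemma geodesic_form_nondegenerate:
  assumes "cmod a = 1" "cmod b = 1" "a \<noteq> b"
  shows "\<bar>Im (cnj a * b)\<bar> < cmod (\<i> * (a - b))"
proof -
  define c where "c = Re a * Re b + Im a * Im b"
  have a: "(Re a)^2 + (Im a)^2 = 1" and b: "(Re b)^2 + (Im b)^2 = 1"
    using assms(1,2) cmod_power2[of a] cmod_power2[of b] by simp_all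
  have W_sq: "cmod (\<i> * (a - b))^2 = 2 - 2 * c"
    using a b unfolding cmod_power2 c_def by (simp add: power2_eq_square algebra_simps)
  have "(Im (cnj a * b))^2 = ((Re a)^2 + (Im a)^2) * ((Re b)^2 + (Im b)^2) - c^2"
    unfolding c_def by (simp add: power2_eq_square algebra_simps)
  then have A_sq: "(Im (cnj a * b))^2 = 1 - c^2" using a b by simp
  have "(Re a - Re b)^2 + (Im a - Im b)^2 = 2 - 2 * c"
    using a b unfolding c_def by (simp add: power2_eq_square algebra_simps)
  moreover have "(Re a - Re b)^2 + (Im a - Im b)^2 > 0"
    using assms(3) by (simp add: sum_power2_gt_zero_iff complex_eq_iff)
  ultimately have "(1 - c)^2 > 0" by simp
  then have "(Im (cnj a * b))^2 < cmod (\<i> * (a - b))^2"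
    unfolding W_sq A_sq by (simp add: power2_eq_square algebra_simps)
  then show ?thesis by (metis abs_le_square_iff abs_norm_cancel not_le)
qed

lemma hyp_line_joining_iff_geodesic:
  assumes "cmod a = 1" "cmod b = 1" "a \<noteq> b"
  shows "hyp_line_joining a b X \<longleftrightarrow> X = geodesic a b"
proof
  assume "hyp_line_joining a b X"
  then obtain C where C: "orth_gcircle C" "a \<in> C" "b \<in> C" "X = C \<inter> disk"
    unfolding hyp_line_joining_def by blast
  obtain A W where AW: "\<bar>A\<bar> < cmod W" "C = {z. herm_form A W A z = 0}"
    using orth_gcircle_herm_form[OF C(1)] .
  obtain s where s: "A = s * Im (cnj a * b)" "W = of_real s * (\<i> * (a - b))"
    using herm_form_two_ideal_zeros[OF assms, of A W] AW C by blast
  have "s \<noteq> 0" using AW(1) s by auto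
  then have "herm_form A W A z = 0 \<longleftrightarrow> herm_form (Im (cnj a * b)) (\<i> * (a - b)) (Im (cnj a * b)) z = 0"
    for z unfolding s herm_form_scale by simp
  then show "X = geodesic a b" unfolding geodesic_def C(4) AW(2) by auto
next
  assume X: "X = geodesic a b"
  let ?C = "{z. herm_form (Im (cnj a * b)) (\<i> * (a - b)) (Im (cnj a * b)) z = 0}"
  have "orth_gcircle ?C"
    by (rule orth_gcircle_herm_form_zeros[OF geodesic_form_nondegenerate[OF assms]])
  moreover have "a \<in> ?C" "b \<in> ?C" using geodesic_form_endpoints[OF assms(1,2)] by auto
  moreover have "X = ?C \<inter> disk" unfolding X geodesic_def by auto
  ultimately show "hyp_line_joining a b X" unfolding hyp_line_joining_def by blast
qed

lemma hyp_line_geodesic: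
  assumes "cmod a = 1" "cmod b = 1" "a \<noteq> b"
  shows "hyp_line (geodesic a b)"
  using hyp_line_joining_iff_geodesic[OF assms]
  unfolding hyp_line_joining_def hyp_line_def by blast

lemma geodesic_commute: "geodesic a b = geodesic b a"
proof -
  have "herm_form (Im (cnj b * a)) (\<i> * (b - a)) (Im (cnj b * a)) z
      = (-1) * herm_form (Im (cnj a * b)) (\<i> * (a - b)) (Im (cnj a * b)) z" for z
    using herm_form_scale[of "-1" "Im (cnj a * b)" "\<i> * (a - b)" z] by (simp add: algebra_simps)
  then show ?thesis unfolding geodesic_def by auto
qed

lemma hyp_line_eq_geodesic:
  assumes "hyp_line L"
  obtains a b where "cmod a = 1" "cmod b = 1" "a \<noteq> b" "L = geodesic a b"
proof -
  obtain C where C: "orth_gcircle C" "L = C \<inter> disk" using assms unfolding hyp_line_def by blast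
  obtain A W where AW: "\<bar>A\<bar> < cmod W" "C = {z. herm_form A W A z = 0}"
    using orth_gcircle_herm_form[OF C(1)] .
  have "W \<noteq> 0" using AW(1) by auto
  have "A^2 < cmod W ^ 2" using AW(1) by (metis abs_le_square_iff abs_norm_cancel not_le)
  define s where "s = sqrt (cmod W ^ 2 - A^2)"
  have s: "s > 0" "s^2 = cmod W ^ 2 - A^2" unfolding s_def using \<open>A^2 < cmod W ^ 2\<close> by simp_all
  text \<open>The two zeros on the unit circle are the points e with cnj W * e = A \<plusminus> \<i> s.\<close>
  define e where "e t = Complex A t * W / of_real (cmod W ^ 2)" for t
  have e_zero: "cmod (e t) = 1 \<and> herm_form A W A (e t) = 0" if "t^2 = s^2" for t
  proof -
    have "cmod (Complex A t) = cmod W" using that s(2) by (simp add: cmod_def)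
    then have "cmod (e t) = 1"
      unfolding e_def using \<open>W \<noteq> 0\<close> by (simp add: norm_mult norm_divide power2_eq_square)
    moreover have "cnj W * e t = Complex A t"
      unfolding e_def using \<open>W \<noteq> 0\<close> by (simp add: complex_norm_square[symmetric] field_simps)
    ultimately show ?thesis unfolding herm_form_def by simp
  qed
  have "e s \<noteq> e (-s)"
  proof
    assume "e s = e (-s)"
    then have "Complex A s * W = Complex A (-s) * W" unfolding e_def using \<open>W \<noteq> 0\<close> by simp
    then show False using \<open>W \<noteq> 0\<close> \<open>s > 0\<close> by simp
  qed
  moreover have "hyp_line_joining (e s) (e (-s)) L" unfolding hyp_line_joining_def
    using C AW e_zero[of s] e_zero[of "-s"] by auto
  ultimately show thesis
    using that e_zero[of s] e_zero[of "-s"] hyp_line_joining_iff_geodesic by auto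
qed

section \<open>A Moebius chart onto the right half-plane\<close>

lemma unit_mult_cnj: "cmod a = 1 \<Longrightarrow> a * cnj a = 1"
  using complex_norm_square[of a] by simp

lemma herm_form_imag_coeff: "herm_form A (\<i> * of_real m) D Z = A * cmod Z ^ 2 - 2 * m * Im Z + D"
  by (simp add: herm_form_def)

locale half_plane_chart =
  fixes e1 e2 :: complex
  assumes e1_unit: "cmod e1 = 1" and e2_unit: "cmod e2 = 1" and e1_ne_e2: "e1 \<noteq> e2"
begin

definition kk :: real where "kk = 1 - Re (e1 * cnj e2)"

definition kappa :: complex where "kappa = e1 * cnj e2 - 1"

text \<open>A Moebius map of the disk onto the right half-plane sending e1 to \<infinity> and e2 to 0.\<close>
definition chart :: "complex \<Rightarrow> complex" where
  "chart z = kappa * (z - e2) / (z - e1)"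

definition chart_inv :: "complex \<Rightarrow> complex" where
  "chart_inv Z = (e1 * Z - kappa * e2) / (Z - kappa)"

lemma norm_e1_e2_sq: "cmod (e1 - e2) ^ 2 = 2 * kk"
  unfolding cmod_diff_power2 kk_def using e1_unit e2_unit by (simp add: mult.commute)

lemma kk_pos: "kk > 0"
proof -
  have "cmod (e1 - e2) ^ 2 > 0" using e1_ne_e2 by simp
  then show ?thesis using norm_e1_e2_sq by simp
qed

lemma norm_kappa_sq: "cmod kappa ^ 2 = 2 * kk"
proof -
  have "kappa = (e1 - e2) * cnj e2"
    unfolding kappa_def using unit_mult_cnj[OF e2_unit] by (simp add: algebra_simps)
  then have "cmod kappa = cmod (e1 - e2)" using e2_unit by (simp add: norm_mult)
  then show ?thesis using norm_e1_e2_sq by simp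
qed

lemma Re_kappa: "Re kappa = - kk"
  unfolding kappa_def kk_def by simp

lemma kappa_nonzero: "kappa \<noteq> 0"
  using Re_kappa kk_pos by auto

lemma disk_ne_pole: "z \<in> disk \<Longrightarrow> z \<noteq> e1"
  using e1_unit unfolding disk_def by auto

lemma Re_chart: "z \<noteq> e1 \<Longrightarrow> Re (chart z) * cmod (z - e1) ^ 2 = kk * (1 - cmod z ^ 2)"
proof -
  assume z: "z \<noteq> e1"
  have "chart z * ((z - e1) * cnj (z - e1)) = kappa * (z - e2) * cnj (z - e1)"
    unfolding chart_def using z by (simp add: field_simps)
  also have "\<dots> = (e1 * cnj e2 - 1) * (z * cnj z) - cnj e2 * z - e1 * cnj z + 1
                  + z * cnj e1 + e2 * cnj z - e2 * cnj e1"
    unfolding kappa_def complex_cnj_diff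
    using unit_mult_cnj[OF e1_unit] unit_mult_cnj[OF e2_unit] by algebra
  finally have "chart z * of_real (cmod (z - e1) ^ 2) =
      (e1 * cnj e2 - 1) * of_real (cmod z ^ 2) - cnj e2 * z - e1 * cnj z + 1
      + z * cnj e1 + e2 * cnj z - e2 * cnj e1"
    by (simp only: complex_norm_square)
  from arg_cong[OF this, of Re] show ?thesis
    unfolding kk_def by (simp add: algebra_simps)
qed

lemma Re_chart_pos: "z \<in> disk \<Longrightarrow> Re (chart z) > 0"
proof -
  assume z: "z \<in> disk"
  then have "cmod z ^ 2 < 1" unfolding disk_def by (simp add: power_less_one_iff)
  then have "kk * (1 - cmod z ^ 2) > 0" using kk_pos by simp
  moreover have "cmod (z - e1) ^ 2 > 0" using disk_ne_pole[OF z] by simp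
  ultimately show ?thesis using Re_chart[OF disk_ne_pole[OF z]] by (metis zero_less_mult_pos2)
qed

lemma Re_chart_unit: "cmod a = 1 \<Longrightarrow> a \<noteq> e1 \<Longrightarrow> Re (chart a) = 0"
  using Re_chart[of a] by simp

lemma chart_diff:
  "z1 \<noteq> e1 \<Longrightarrow> z2 \<noteq> e1 \<Longrightarrow> chart z1 - chart z2 = kappa * (e2 - e1) * (z1 - z2) / ((z1 - e1) * (z2 - e1))"
  unfolding chart_def by (simp add: field_simps)

lemma chart_inj: "z1 \<noteq> e1 \<Longrightarrow> z2 \<noteq> e1 \<Longrightarrow> chart z1 = chart z2 \<Longrightarrow> z1 = z2"
  using chart_diff[of z1 z2] kappa_nonzero e1_ne_e2 by auto

lemma ne_kappa: "Re Z \<ge> 0 \<Longrightarrow> Z \<noteq> kappa"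
  using Re_kappa kk_pos by auto

lemma chart_inv_minus_pole: "Re Z \<ge> 0 \<Longrightarrow> chart_inv Z - e1 = kappa * (e1 - e2) / (Z - kappa)"
  using ne_kappa[of Z] unfolding chart_inv_def by (simp add: field_simps)

lemma chart_inv_ne_pole: "Re Z \<ge> 0 \<Longrightarrow> chart_inv Z \<noteq> e1"
  using chart_inv_minus_pole[of Z] kappa_nonzero e1_ne_e2 ne_kappa[of Z] by auto

lemma chart_chart_inv: "Re Z \<ge> 0 \<Longrightarrow> chart (chart_inv Z) = Z"
proof -
  assume Z: "Re Z \<ge> 0"
  have k: "Z - kappa \<noteq> 0" using ne_kappa[OF Z] by simp
  have "chart_inv Z - e2 = Z * (e1 - e2) / (Z - kappa)"
    using k unfolding chart_inv_def by (simp add: field_simps)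
  then have "chart (chart_inv Z) = (Z * (kappa * (e1 - e2))) / (kappa * (e1 - e2))"
    unfolding chart_def chart_inv_minus_pole[OF Z] using k by (simp add: ac_simps)
  also have "\<dots> = Z" using kappa_nonzero e1_ne_e2 by simp
  finally show ?thesis .
qed

lemma Re_chart_inv:
  "Re Z \<ge> 0 \<Longrightarrow> Re Z * cmod (chart_inv Z - e1) ^ 2 = kk * (1 - cmod (chart_inv Z) ^ 2)"
  using Re_chart[OF chart_inv_ne_pole] chart_chart_inv by simp

lemma chart_inv_disk: "Re Z > 0 \<Longrightarrow> chart_inv Z \<in> disk"
proof -
  assume Z: "Re Z > 0"
  have "Re Z * cmod (chart_inv Z - e1) ^ 2 > 0" using Z chart_inv_ne_pole[of Z] by simp
  then have "kk * (1 - cmod (chart_inv Z) ^ 2) > 0" using Re_chart_inv Z by simp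
  then have "cmod (chart_inv Z) ^ 2 < 1" using kk_pos by (simp add: zero_less_mult_iff)
  then show ?thesis unfolding disk_def by (simp add: power_less_one_iff)
qed

lemma chart_inv_unit: "Re Z = 0 \<Longrightarrow> cmod (chart_inv Z) = 1"
proof -
  assume Z: "Re Z = 0"
  then have "kk * (1 - cmod (chart_inv Z) ^ 2) = 0" using Re_chart_inv[of Z] by simp
  then have "cmod (chart_inv Z) ^ 2 = 1" using kk_pos by simp
  then show ?thesis using norm_ge_zero[of "chart_inv Z"] by (auto simp: power2_eq_1_iff)
qed

lemma hdist_chart:
  assumes "z1 \<in> disk" "z2 \<in> disk"
  shows "hdist z1 z2 = arcosh (1 + cmod (chart z1 - chart z2) ^ 2 / (2 * Re (chart z1) * Re (chart z2)))"
proof -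
  have n: "z1 \<noteq> e1" "z2 \<noteq> e1" using disk_ne_pole assms by auto
  define N1 N2 where "N1 = cmod (z1 - e1) ^ 2" and "N2 = cmod (z2 - e1) ^ 2"
  have N: "N1 > 0" "N2 > 0" unfolding N1_def N2_def using n by auto
  define p1 p2 where "p1 = 1 - cmod z1 ^ 2" and "p2 = 1 - cmod z2 ^ 2"
  have p: "p1 > 0" "p2 > 0"
    using assms unfolding disk_def p1_def p2_def by (simp_all add: power_less_one_iff)
  have Re1: "Re (chart z1) = kk * p1 / N1"
    using Re_chart[OF n(1)] N unfolding N1_def p1_def by (simp add: eq_divide_eq)
  have Re2: "Re (chart z2) = kk * p2 / N2"
    using Re_chart[OF n(2)] N unfolding N2_def p2_def by (simp add: eq_divide_eq)
  have "cmod (chart z1 - chart z2) ^ 2 = cmod kappa ^ 2 * cmod (e2 - e1) ^ 2 * cmod (z1 - z2) ^ 2 / (N1 * N2)"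
    unfolding chart_diff[OF n] N1_def N2_def
    by (simp add: norm_mult norm_divide power_mult_distrib power_divide)
  also have "\<dots> = 4 * kk ^ 2 * cmod (z1 - z2) ^ 2 / (N1 * N2)"
    using norm_e1_e2_sq norm_kappa_sq by (simp add: norm_minus_commute power2_eq_square)
  finally have "cmod (chart z1 - chart z2) ^ 2 / (2 * Re (chart z1) * Re (chart z2))
      = 2 * cmod (z1 - z2) ^ 2 / (p1 * p2)"
    unfolding Re1 Re2 using N p kk_pos by (simp add: field_simps power2_eq_square)
  then show ?thesis unfolding hdist_def p1_def p2_def by simp
qed

lemma herm_form_chart_mult:
  assumes z: "z \<noteq> e1"
  shows "herm_form A M D (chart z) * cmod (z - e1) ^ 2 = A * cmod kappa ^ 2 * cmod (z - e2) ^ 2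
    - 2 * Re (cnj M * kappa * (z - e2) * cnj (z - e1)) + D * cmod (z - e1) ^ 2"
proof -
  have chart_mult: "chart z * (z - e1) = kappa * (z - e2)" unfolding chart_def using z by simp
  then have norm_part: "cmod (chart z) ^ 2 * cmod (z - e1) ^ 2 = cmod kappa ^ 2 * cmod (z - e2) ^ 2"
    by (metis norm_mult power_mult_distrib)
  have "Re (cnj M * chart z) * cmod (z - e1) ^ 2 = Re (cnj M * chart z * of_real (cmod (z - e1) ^ 2))"
    by simp
  also have "\<dots> = Re (cnj M * (chart z * (z - e1)) * cnj (z - e1))"
    by (simp only: complex_norm_square mult.assoc)
  also have "\<dots> = Re (cnj M * kappa * (z - e2) * cnj (z - e1))"
    by (simp only: chart_mult mult.assoc)
  finally have Re_part:
    "Re (cnj M * chart z) * cmod (z - e1) ^ 2 = Re (cnj M * kappa * (z - e2) * cnj (z - e1))" .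
  have "herm_form A M D (chart z) * cmod (z - e1) ^ 2 = A * (cmod (chart z) ^ 2 * cmod (z - e1) ^ 2)
      - 2 * (Re (cnj M * chart z) * cmod (z - e1) ^ 2) + D * cmod (z - e1) ^ 2"
    unfolding herm_form_def by (simp add: algebra_simps)
  then show ?thesis unfolding norm_part Re_part by (simp add: mult.assoc)
qed

lemma herm_form_chart_pullback:
  fixes A D m :: real
  obtains A' W' where
    "\<And>z. z \<noteq> e1 \<Longrightarrow> herm_form A (\<i> * of_real m) D (chart z) * cmod (z - e1) ^ 2 = herm_form A' W' A' z"
    and "A = 0 \<Longrightarrow> herm_form A' W' A' e1 = 0"
proof -
  define M where "M = \<i> * complex_of_real m"
  define A' where "A' = A * cmod kappa ^ 2 - 2 * m * Im kappa + D"
  define W' where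
    "W' = of_real (A * cmod kappa ^ 2) * e2 - M * cnj kappa * e1 - cnj M * kappa * e2 + of_real D * e1"
  have const: "Re (cnj M * kappa * e2 * cnj e1) = m * Im kappa"
  proof -
    have "kappa * (e2 * cnj e1) = 1 - e2 * cnj e1"
      unfolding kappa_def using unit_mult_cnj[OF e1_unit] unit_mult_cnj[OF e2_unit] by algebra
    then have "Re (cnj M * kappa * e2 * cnj e1) = Re (cnj M * (1 - e2 * cnj e1))"
      by (simp only: mult.assoc)
    also have "\<dots> = m * Im kappa" unfolding M_def kappa_def by (simp add: algebra_simps)
    finally show ?thesis .
  qed
  have poly: "A * cmod kappa ^ 2 * cmod (z - e2) ^ 2 - 2 * Re (cnj M * kappa * (z - e2) * cnj (z - e1))
      + D * cmod (z - e1) ^ 2 = herm_form A' W' A' z" for z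
  proof -
    have "A * cmod kappa ^ 2 * cmod (z - e2) ^ 2 - 2 * Re (cnj M * kappa * (z - e2) * cnj (z - e1))
        + D * cmod (z - e1) ^ 2
      = (A * cmod kappa ^ 2 - 2 * Re (cnj M * kappa) + D) * cmod z ^ 2 - 2 * Re (cnj W' * z)
        + (A * cmod kappa ^ 2 * cmod e2 ^ 2 - 2 * Re (cnj M * kappa * e2 * cnj e1) + D * cmod e1 ^ 2)"
      unfolding W'_def cmod_power2 by (simp add: algebra_simps power2_eq_square)
    also have "\<dots> = herm_form A' W' A' z"
      unfolding herm_form_def A'_def const e1_unit e2_unit by (simp add: M_def)
    finally show ?thesis .
  qed
  have "herm_form A M D (chart z) * cmod (z - e1) ^ 2 = herm_form A' W' A' z" if "z \<noteq> e1" for z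
    unfolding poly[symmetric] by (rule herm_form_chart_mult[OF that])
  moreover have "A = 0 \<Longrightarrow> herm_form A' W' A' e1 = 0" using poly[of e1] by simp
  ultimately show thesis using that unfolding M_def by blast
qed

lemma geodesic_chart_form:
  fixes A D m :: real
  defines "f \<equiv> herm_form A (\<i> * of_real m) D"
  assumes a: "cmod a = 1" and b: "cmod b = 1" "b \<noteq> e1" "f (chart b) = 0" and "a \<noteq> b"
    and a_zero: "a = e1 \<and> A = 0 \<or> a \<noteq> e1 \<and> f (chart a) = 0"
    and nondeg: "Re u > 0" "f u \<noteq> 0"
  shows "geodesic a b = {z \<in> disk. f (chart z) = 0}"
proof -
  obtain A' W' where pull: "\<And>z. z \<noteq> e1 \<Longrightarrow> f (chart z) * cmod (z - e1) ^ 2 = herm_form A' W' A' z"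
    and pole: "A = 0 \<Longrightarrow> herm_form A' W' A' e1 = 0"
    unfolding f_def by (rule herm_form_chart_pullback[where A = A and m = m and D = D]) blast
  have "herm_form A' W' A' a = 0"
    using a_zero
  proof
    assume "a \<noteq> e1 \<and> f (chart a) = 0"
    then show ?thesis using pull[of a] by simp
  qed (use pole in simp)
  moreover have "herm_form A' W' A' b = 0" using pull[of b] b by simp
  ultimately obtain s where s: "A' = s * Im (cnj a * b)" "W' = of_real s * (\<i> * (a - b))"
    using herm_form_two_ideal_zeros[OF a b(1) \<open>a \<noteq> b\<close>] by blast
  have "s \<noteq> 0"
  proof
    assume "s = 0"
    then have "herm_form A' W' A' (chart_inv u) = 0" using s by (simp add: herm_form_def)
    moreover have "chart_inv u \<noteq> e1" "chart (chart_inv u) = u"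
      using chart_inv_ne_pole[of u] chart_chart_inv[of u] nondeg(1) by simp_all
    ultimately have "f u * cmod (chart_inv u - e1) ^ 2 = 0" using pull[of "chart_inv u"] by simp
    then show False using nondeg(2) \<open>chart_inv u \<noteq> e1\<close> by simp
  qed
  have "f (chart z) = 0 \<longleftrightarrow> herm_form (Im (cnj a * b)) (\<i> * (a - b)) (Im (cnj a * b)) z = 0"
    if "z \<in> disk" for z
  proof -
    have "z \<noteq> e1" using disk_ne_pole[OF that] .
    then have "f (chart z) * cmod (z - e1) ^ 2
        = s * herm_form (Im (cnj a * b)) (\<i> * (a - b)) (Im (cnj a * b)) z"
      using pull[of z] unfolding s herm_form_scale by simp
    then show ?thesis using \<open>z \<noteq> e1\<close> \<open>s \<noteq> 0\<close> by (metis mult_eq_0_iff right_minus_eq zero_less_norm_iff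
          zero_less_power less_irrefl)
  qed
  then show ?thesis unfolding geodesic_def by auto
qed

definition ideal_pt :: "real \<Rightarrow> complex" where
  "ideal_pt x = chart_inv (\<i> * of_real x)"

lemma ideal_pt_unit: "cmod (ideal_pt x) = 1"
  unfolding ideal_pt_def by (rule chart_inv_unit) simp

lemma ideal_pt_ne_pole: "ideal_pt x \<noteq> e1"
  unfolding ideal_pt_def by (rule chart_inv_ne_pole) simp

lemma chart_ideal_pt: "chart (ideal_pt x) = \<i> * of_real x"
  unfolding ideal_pt_def by (rule chart_chart_inv) simp

lemma Im_chart_ideal_pt [simp]: "Im (chart (ideal_pt x)) = x"
  by (simp add: chart_ideal_pt)

lemma ideal_pt_eq_iff: "ideal_pt x = ideal_pt y \<longleftrightarrow> x = y"
  by (metis Im_chart_ideal_pt)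

lemma ideal_pt_Im_chart:
  assumes "cmod a = 1" "a \<noteq> e1"
  shows "ideal_pt (Im (chart a)) = a"
proof -
  have "chart a = \<i> * of_real (Im (chart a))" using Re_chart_unit[OF assms] by (simp add: complex_eq_iff)
  then show ?thesis using chart_inj[OF ideal_pt_ne_pole assms(2)] chart_ideal_pt by metis
qed

lemma geodesic_ideal_pts:
  assumes "\<alpha> \<noteq> \<beta>"
  shows "geodesic (ideal_pt \<alpha>) (ideal_pt \<beta>) =
    {z \<in> disk. cmod (chart z) ^ 2 - (\<alpha> + \<beta>) * Im (chart z) + \<alpha> * \<beta> = 0}"
proof -
  define f where "f = herm_form 1 (\<i> * of_real ((\<alpha> + \<beta>) / 2)) (\<alpha> * \<beta>)"
  have f: "f Z = cmod Z ^ 2 - (\<alpha> + \<beta>) * Im Z + \<alpha> * \<beta>" for Z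
    unfolding f_def herm_form_imag_coeff by simp
  have f_ideal: "f (chart (ideal_pt x)) = (x - \<alpha>) * (x - \<beta>)" for x
    unfolding f chart_ideal_pt by (simp add: norm_mult algebra_simps power2_eq_square)
  define t where "t = sqrt (\<bar>\<alpha> * \<beta>\<bar> + 1)"
  have "t > 0" unfolding t_def by (simp add: add_nonneg_pos)
  have "f (of_real t) = \<bar>\<alpha> * \<beta>\<bar> + 1 + \<alpha> * \<beta>" unfolding f t_def by simp
  then have "f (of_real t) \<noteq> 0" by linarith
  have "geodesic (ideal_pt \<alpha>) (ideal_pt \<beta>) = {z \<in> disk. f (chart z) = 0}"
    unfolding f_def
  proof (rule geodesic_chart_form[where u = "of_real t"])
  qed (use \<open>t > 0\<close> \<open>f (of_real t) \<noteq> 0\<close> f_ideal ideal_pt_unit ideal_pt_ne_pole ideal_pt_eq_iff assms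
      in \<open>simp_all add: f_def\<close>)
  then show ?thesis unfolding f by simp
qed

lemma geodesic_pole_ideal_pt: "geodesic e1 (ideal_pt \<beta>) = {z \<in> disk. Im (chart z) = \<beta>}"
proof -
  define f where "f = herm_form 0 (\<i> * of_real (- 1 / 2)) (- \<beta>)"
  have f: "f Z = Im Z - \<beta>" for Z unfolding f_def herm_form_imag_coeff by simp
  have "geodesic e1 (ideal_pt \<beta>) = {z \<in> disk. f (chart z) = 0}"
    unfolding f_def
    by (rule geodesic_chart_form[where u = "Complex 1 (\<beta> + 1)"])
      (use ideal_pt_unit ideal_pt_ne_pole ideal_pt_ne_pole[symmetric] e1_unit f in \<open>auto simp: f_def\<close>)
  then show ?thesis unfolding f by simp
qed

lemma geodesic_axis: "geodesic e1 e2 = {z \<in> disk. Im (chart z) = 0}"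
proof -
  have "chart e2 = 0" unfolding chart_def by simp
  then have "e2 = ideal_pt 0" using ideal_pt_Im_chart[OF e2_unit e1_ne_e2[symmetric]] by simp
  then show ?thesis using geodesic_pole_ideal_pt[of 0] by simp
qed

lemma axis_point_on_geodesic_iff:
  assumes "P \<in> disk" "Im (chart P) = 0" "\<alpha> \<noteq> \<beta>"
  shows "P \<in> geodesic (ideal_pt \<alpha>) (ideal_pt \<beta>) \<longleftrightarrow> Re (chart P) ^ 2 + \<alpha> * \<beta> = 0"
  using assms by (simp add: geodesic_ideal_pts cmod_power2)

section \<open>Ideal triangles circumscribing a triangle\<close>

lemma circumscribing_vertices_ne_pole:
  assumes P: "P \<in> disk" "Im (chart P) = 0" and Q: "Q \<in> disk" "Im (chart Q) = 0"
    and abc: "cmod a = 1" "cmod b = 1" "cmod c = 1" "a \<noteq> b" "b \<noteq> c" "a \<noteq> c"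
    and PQ: "P \<in> geodesic a b" "Q \<in> geodesic b c"
  shows "a \<noteq> e1 \<and> b \<noteq> e1 \<and> c \<noteq> e1"
proof -
  have pole_side: "Im (chart x) = 0"
    if "cmod x = 1" "x \<noteq> e1" "z \<in> disk" "Im (chart z) = 0" "z \<in> geodesic e1 x" for x z
    using that geodesic_pole_ideal_pt[of "Im (chart x)"] ideal_pt_Im_chart[of x] by simp
  have far_side: "Im (chart x) \<noteq> 0"
    if "cmod x = 1" "x \<noteq> e1" "cmod y = 1" "y \<noteq> e1" "x \<noteq> y"
      "z \<in> disk" "Im (chart z) = 0" "z \<in> geodesic x y" for x y z
  proof -
    have "Im (chart x) \<noteq> Im (chart y)" using that ideal_pt_Im_chart by metis
    then have "Re (chart z) ^ 2 + Im (chart x) * Im (chart y) = 0"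
      using that axis_point_on_geodesic_iff ideal_pt_Im_chart by metis
    then show ?thesis using Re_chart_pos[OF \<open>z \<in> disk\<close>] by auto
  qed
  have "a \<noteq> e1"
  proof
    assume "a = e1"
    then show False using pole_side[of b P] far_side[of b c Q] abc P Q PQ by auto
  qed
  moreover have "c \<noteq> e1"
  proof
    assume "c = e1"
    then show False using pole_side[of b Q] far_side[of b a P] abc P Q PQ geodesic_commute by metis
  qed
  moreover have "b \<noteq> e1"
  proof
    assume "b = e1"
    then have "Im (chart a) = 0" "Im (chart c) = 0"
      using pole_side[of a P] pole_side[of c Q] abc P Q PQ geodesic_commute by auto
    then show False using ideal_pt_Im_chart abc \<open>a \<noteq> e1\<close> \<open>c \<noteq> e1\<close> by metis
  qed
  ultimately show ?thesis by blast
qed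

lemma circumscribing_ideal_triangle_coordinates:
  assumes P: "P \<in> disk" "Im (chart P) = 0" and Q: "Q \<in> disk" "Im (chart Q) = 0"
    and T: "circumscribing_ideal_triangle T P Q R"
  obtains \<alpha> \<beta> \<gamma> where "T = {ideal_pt \<alpha>, ideal_pt \<beta>, ideal_pt \<gamma>}"
    "Re (chart P) ^ 2 + \<alpha> * \<beta> = 0" "Re (chart Q) ^ 2 + \<beta> * \<gamma> = 0"
    "cmod (chart R) ^ 2 - (\<gamma> + \<alpha>) * Im (chart R) + \<gamma> * \<alpha> = 0"
proof -
  obtain a b c Lab Lbc Lca where T_eq: "T = {a, b, c}" and abc: "a \<noteq> b" "b \<noteq> c" "a \<noteq> c"
    and unit: "cmod a = 1" "cmod b = 1" "cmod c = 1"
    and L: "hyp_line_joining a b Lab" "hyp_line_joining b c Lbc" "hyp_line_joining c a Lca"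
    and PQR: "P \<in> Lab" "Q \<in> Lbc" "R \<in> Lca"
    using T unfolding circumscribing_ideal_triangle_def circle_at_infinity_def by blast
  have mem: "P \<in> geodesic a b" "Q \<in> geodesic b c" "R \<in> geodesic c a"
    using PQR L hyp_line_joining_iff_geodesic[OF unit(1,2) abc(1)]
      hyp_line_joining_iff_geodesic[OF unit(2,3) abc(2)]
      hyp_line_joining_iff_geodesic[OF unit(3,1) abc(3)[symmetric]] by simp_all
  have ne: "a \<noteq> e1" "b \<noteq> e1" "c \<noteq> e1"
    using circumscribing_vertices_ne_pole[OF P Q(1,2) unit abc mem(1,2)] by auto
  define \<alpha> \<beta> \<gamma> where "\<alpha> = Im (chart a)" and "\<beta> = Im (chart b)" and "\<gamma> = Im (chart c)"
  have a: "a = ideal_pt \<alpha>" and b: "b = ideal_pt \<beta>" and c: "c = ideal_pt \<gamma>"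
    unfolding \<alpha>_def \<beta>_def \<gamma>_def using ideal_pt_Im_chart unit ne by simp_all
  have "\<alpha> \<noteq> \<beta>" "\<beta> \<noteq> \<gamma>" "\<gamma> \<noteq> \<alpha>" using abc unfolding a b c by auto
  have "Re (chart P) ^ 2 + \<alpha> * \<beta> = 0"
    using mem(1) axis_point_on_geodesic_iff[OF P \<open>\<alpha> \<noteq> \<beta>\<close>] unfolding a b by simp
  moreover have "Re (chart Q) ^ 2 + \<beta> * \<gamma> = 0"
    using mem(2) axis_point_on_geodesic_iff[OF Q(1,2) \<open>\<beta> \<noteq> \<gamma>\<close>] unfolding b c by simp
  moreover have "cmod (chart R) ^ 2 - (\<gamma> + \<alpha>) * Im (chart R) + \<gamma> * \<alpha> = 0"
    using mem(3) geodesic_ideal_pts[OF \<open>\<gamma> \<noteq> \<alpha>\<close>] unfolding c a by simp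
  ultimately show thesis using that unfolding T_eq a b c by blast
qed

lemma circumscribing_ideal_triangle_of_coordinates:
  assumes P: "P \<in> disk" "Im (chart P) = 0" and Q: "Q \<in> disk" "Im (chart Q) = 0" "P \<noteq> Q"
    and R: "R \<in> disk" and T: "T = {ideal_pt \<alpha>, ideal_pt \<beta>, ideal_pt \<gamma>}"
    and eqs: "Re (chart P) ^ 2 + \<alpha> * \<beta> = 0" "Re (chart Q) ^ 2 + \<beta> * \<gamma> = 0"
      "cmod (chart R) ^ 2 - (\<gamma> + \<alpha>) * Im (chart R) + \<gamma> * \<alpha> = 0"
  shows "circumscribing_ideal_triangle T P Q R"
proof -
  have pos: "Re (chart P) ^ 2 > 0" "Re (chart Q) ^ 2 > 0"
    using Re_chart_pos[OF P(1)] Re_chart_pos[OF Q(1)] by simp_all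
  have "\<alpha> \<noteq> \<beta>"
  proof
    assume "\<alpha> = \<beta>"
    then show False using eqs(1) pos(1) zero_le_power2[of \<alpha>] by (simp add: power2_eq_square)
  qed
  have "\<beta> \<noteq> \<gamma>"
  proof
    assume "\<beta> = \<gamma>"
    then show False using eqs(2) pos(2) zero_le_power2[of \<beta>] by (simp add: power2_eq_square)
  qed
  have "\<gamma> \<noteq> \<alpha>"
  proof
    assume "\<gamma> = \<alpha>"
    then have "Re (chart P) ^ 2 = Re (chart Q) ^ 2" using eqs(1,2) by (simp add: algebra_simps)
    then have "Re (chart P) = Re (chart Q)"
      using Re_chart_pos[OF P(1)] Re_chart_pos[OF Q(1)] by (simp add: less_imp_le)
    then have "chart P = chart Q" using P(2) Q(2) by (simp add: complex_eq_iff)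
    then show False using chart_inj disk_ne_pole P(1) Q(1) \<open>P \<noteq> Q\<close> by blast
  qed
  define a b c where "a = ideal_pt \<alpha>" and "b = ideal_pt \<beta>" and "c = ideal_pt \<gamma>"
  have abc: "a \<noteq> b" "b \<noteq> c" "a \<noteq> c" "c \<noteq> a"
    unfolding a_def b_def c_def ideal_pt_eq_iff using \<open>\<alpha> \<noteq> \<beta>\<close> \<open>\<beta> \<noteq> \<gamma>\<close> \<open>\<gamma> \<noteq> \<alpha>\<close> by auto
  have unit: "a \<in> circle_at_infinity" "b \<in> circle_at_infinity" "c \<in> circle_at_infinity"
    unfolding a_def b_def c_def circle_at_infinity_def by (simp_all add: ideal_pt_unit)
  have lines: "hyp_line_joining a b (geodesic a b)" "hyp_line_joining b c (geodesic b c)"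
      "hyp_line_joining c a (geodesic c a)"
    using hyp_line_joining_iff_geodesic[OF ideal_pt_unit ideal_pt_unit] abc
    unfolding a_def b_def c_def by simp_all
  have "P \<in> geodesic a b"
    using eqs(1) axis_point_on_geodesic_iff[OF P \<open>\<alpha> \<noteq> \<beta>\<close>] unfolding a_def b_def by simp
  moreover have "Q \<in> geodesic b c"
    using eqs(2) axis_point_on_geodesic_iff[OF Q(1,2) \<open>\<beta> \<noteq> \<gamma>\<close>] unfolding b_def c_def by simp
  moreover have "R \<in> geodesic c a"
    using eqs(3) geodesic_ideal_pts[OF \<open>\<gamma> \<noteq> \<alpha>\<close>] R unfolding c_def a_def by simp
  moreover have "T = {a, b, c}" unfolding T a_def b_def c_def ..
  ultimately show "circumscribing_ideal_triangle T P Q R"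
    unfolding circumscribing_ideal_triangle_def using abc unit lines by blast
qed

lemma circumscribing_ideal_triangle_iff_coordinates:
  assumes P: "P \<in> disk" "Im (chart P) = 0" and Q: "Q \<in> disk" "Im (chart Q) = 0" "P \<noteq> Q"
    and R: "R \<in> disk"
  shows "circumscribing_ideal_triangle T P Q R \<longleftrightarrow>
    (\<exists>\<alpha> \<beta> \<gamma>. T = {ideal_pt \<alpha>, ideal_pt \<beta>, ideal_pt \<gamma>} \<and>
      Re (chart P) ^ 2 + \<alpha> * \<beta> = 0 \<and> Re (chart Q) ^ 2 + \<beta> * \<gamma> = 0 \<and>
      cmod (chart R) ^ 2 - (\<gamma> + \<alpha>) * Im (chart R) + \<gamma> * \<alpha> = 0)"
  (is "?circumscribing \<longleftrightarrow> ?coordinates")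
proof
  assume ?circumscribing
  then show ?coordinates by (rule circumscribing_ideal_triangle_coordinates[OF P Q(1,2)]) blast
next
  assume ?coordinates
  then show ?circumscribing using circumscribing_ideal_triangle_of_coordinates[OF P Q R] by blast
qed

lemma cosh_hdist_axis:
  assumes "P \<in> disk" "Im (chart P) = 0" "Q \<in> disk" "Im (chart Q) = 0"
  shows "cosh (hdist P Q) = (Re (chart P) ^ 2 + Re (chart Q) ^ 2) / (2 * Re (chart P) * Re (chart Q))"
proof -
  define p q where "p = Re (chart P)" and "q = Re (chart Q)"
  have "p > 0" "q > 0" unfolding p_def q_def using Re_chart_pos assms(1,3) by simp_all
  have "chart P = of_real p" "chart Q = of_real q"
    unfolding p_def q_def using assms by (simp_all add: complex_eq_iff)
  then have "1 + cmod (chart P - chart Q) ^ 2 / (2 * Re (chart P) * Re (chart Q))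
      = (p ^ 2 + q ^ 2) / (2 * p * q)"
    using \<open>p > 0\<close> \<open>q > 0\<close> by (simp add: field_simps power2_eq_square flip: of_real_diff)
  moreover have "1 \<le> 1 + cmod (chart P - chart Q) ^ 2 / (2 * Re (chart P) * Re (chart Q))"
    using \<open>p > 0\<close> \<open>q > 0\<close> unfolding p_def q_def by simp
  ultimately show ?thesis unfolding hdist_chart[OF assms(1,3)] p_def q_def by simp
qed

definition ideal_triangle :: "real \<Rightarrow> real \<Rightarrow> real \<Rightarrow> complex set" where
  "ideal_triangle p q t = {ideal_pt (- p * t / q), ideal_pt (p * q / t), ideal_pt (- q * t / p)}"

lemma circumscribing_ideal_triangles_eq:
  assumes P: "P \<in> disk" "Im (chart P) = 0" and Q: "Q \<in> disk" "Im (chart Q) = 0" "P \<noteq> Q"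
    and R: "R \<in> disk"
  shows "{T. circumscribing_ideal_triangle T P Q R} = ideal_triangle (Re (chart P)) (Re (chart Q)) `
      {t. t ^ 2 + 2 * (cosh (hdist P Q) * Im (chart R)) * t + cmod (chart R) ^ 2 = 0}"
proof -
  have "Re (chart P) > 0" "Re (chart Q) > 0" "Re (chart R) > 0"
    using Re_chart_pos P(1) Q(1) R by simp_all
  moreover have "cmod (chart R) ^ 2 > 0" using \<open>Re (chart R) > 0\<close> by (auto simp: complex_eq_iff)
  ultimately have "Re (chart P) > 0" "Re (chart Q) > 0" "cmod (chart R) ^ 2 > 0" by simp_all
  note quadratic = ideal_coordinates_iff_quadratic[OF this, where y = "Im (chart R)"]
  show ?thesis
    unfolding circumscribing_ideal_triangle_iff_coordinates[OF P Q R] quadratic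
      cosh_hdist_axis[OF P Q(1,2)] ideal_triangle_def
    by auto
qed

lemma ideal_triangle_inj_on:
  fixes p q K W :: real
  assumes p: "p > 0" and q: "q > 0" and W: "W > 0"
  shows "inj_on (ideal_triangle p q) {t. t ^ 2 + 2 * K * t + W = 0}"
proof (rule inj_onI, rule ccontr)
  fix t1 t2
  assume roots: "t1 \<in> {t. t ^ 2 + 2 * K * t + W = 0}" "t2 \<in> {t. t ^ 2 + 2 * K * t + W = 0}"
    and eq: "ideal_triangle p q t1 = ideal_triangle p q t2" and "t1 \<noteq> t2"
  then have prod: "t1 * t2 = W" using quadratic_roots_product[of t1 K W t2] by simp
  then have "t1 \<noteq> 0" "t2 \<noteq> 0" using W by auto
  have "ideal_pt (p * q / t1) \<in> ideal_triangle p q t2" using eq unfolding ideal_triangle_def by auto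
  then have "p * q / t1 \<in> {- p * t2 / q, p * q / t2, - q * t2 / p}"
    by (simp add: ideal_triangle_def ideal_pt_eq_iff)
  moreover have "p * q / t1 \<noteq> - p * t2 / q"
  proof
    assume "p * q / t1 = - p * t2 / q"
    then have "p * (q * q) = - p * (t1 * t2)" using \<open>t1 \<noteq> 0\<close> q by (simp add: field_simps)
    then have "p * (q * q + W) = 0" using prod by (simp add: algebra_simps)
    moreover have "p * (q * q + W) > 0" using p q W by (simp add: add_pos_pos)
    ultimately show False by linarith
  qed
  moreover have "p * q / t1 \<noteq> - q * t2 / p"
  proof
    assume "p * q / t1 = - q * t2 / p"
    then have "q * (p * p) = - q * (t1 * t2)" using \<open>t1 \<noteq> 0\<close> p by (simp add: field_simps)
    then have "q * (p * p + W) = 0" using prod by (simp add: algebra_simps)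
    moreover have "q * (p * p + W) > 0" using p q W by (simp add: add_pos_pos)
    ultimately show False by linarith
  qed
  moreover have "p * q / t1 \<noteq> p * q / t2" using \<open>t1 \<noteq> t2\<close> p q by simp
  ultimately show False by blast
qed

lemma hdist_axis_point:
  assumes R: "R \<in> disk" and z: "z \<in> disk" "Im (chart z) = 0"
  shows "hdist R z = arcosh (cmod (chart R) / Re (chart R)
    + (Re (chart z) - cmod (chart R)) ^ 2 / (2 * Re (chart R) * Re (chart z)))"
proof -
  define w x t where "w = chart R" and "x = Re (chart R)" and "t = Re (chart z)"
  have "x > 0" "t > 0" unfolding x_def t_def using Re_chart_pos R z(1) by simp_all
  have "chart z = of_real t" unfolding t_def using z(2) by (simp add: complex_eq_iff)
  moreover have "cmod (w - of_real t) ^ 2 = cmod w ^ 2 - 2 * x * t + t ^ 2"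
    unfolding cmod_diff_power2 x_def w_def by (simp add: mult.commute)
  then have "1 + cmod (w - of_real t) ^ 2 / (2 * x * t) = cmod w / x + (t - cmod w) ^ 2 / (2 * x * t)"
    using \<open>x > 0\<close> \<open>t > 0\<close> by (simp add: field_simps power2_eq_square)
  ultimately show ?thesis using hdist_chart[OF R z(1)] unfolding w_def x_def t_def by simp
qed

lemma hdist_set_axis:
  assumes R: "R \<in> disk"
  shows "hdist_set R {z \<in> disk. Im (chart z) = 0} = arcosh (cmod (chart R) / Re (chart R))"
proof -
  define w x where "w = chart R" and "x = Re (chart R)"
  have "x > 0" unfolding x_def using Re_chart_pos[OF R] .
  have "cmod w \<ge> x" unfolding w_def x_def by (rule complex_Re_le_cmod)
  then have "cmod w > 0" "1 \<le> cmod w / x" using \<open>x > 0\<close> by auto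
  define z0 where "z0 = chart_inv (of_real (cmod w))"
  have z0: "z0 \<in> disk" "chart z0 = of_real (cmod w)"
    unfolding z0_def using chart_inv_disk chart_chart_inv \<open>cmod w > 0\<close> by simp_all
  then have "hdist R z0 = arcosh (cmod w / x)"
    using hdist_axis_point[OF R z0(1)] unfolding w_def x_def by simp
  then have "arcosh (cmod w / x) \<in> hdist R ` {z \<in> disk. Im (chart z) = 0}"
    using z0 by (intro image_eqI[where x = z0]) simp_all
  moreover have "arcosh (cmod w / x) \<le> hdist R z" if "z \<in> disk" "Im (chart z) = 0" for z
  proof -
    define r where "r = cmod w / x + (Re (chart z) - cmod w) ^ 2 / (2 * x * Re (chart z))"
    have "(Re (chart z) - cmod w) ^ 2 / (2 * x * Re (chart z)) \<ge> 0"
      using \<open>x > 0\<close> Re_chart_pos[OF that(1)] by simp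
    then have "cmod w / x \<le> r" unfolding r_def by linarith
    then have "\<not> arcosh r < arcosh (cmod w / x)" using \<open>1 \<le> cmod w / x\<close> by simp
    then show ?thesis using hdist_axis_point[OF R that] unfolding r_def w_def x_def by linarith
  qed
  ultimately have "Inf (hdist R ` {z \<in> disk. Im (chart z) = 0}) = arcosh (cmod w / x)"
    by (intro cInf_eq_minimum) auto
  then show ?thesis unfolding hdist_set_def w_def x_def .
qed

lemma hyp_line_through_axis_point:
  assumes P: "P \<in> disk" "Im (chart P) = 0" and R: "R \<in> disk" "Im (chart R) \<noteq> 0"
  obtains L where "hyp_line L" "P \<in> L" "R \<in> L"
proof -
  define p y where "p = Re (chart P)" and "y = Im (chart R)"
  have "p > 0" unfolding p_def using Re_chart_pos P(1) by simp
  text \<open>The semicircle through chart R centred at \<i> * c on the imaginary axis passes through p.\<close>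
  define c where "c = (cmod (chart R) ^ 2 - p ^ 2) / (2 * y)"
  define s where "s = sqrt (p ^ 2 + c ^ 2)"
  have "s > 0" unfolding s_def using \<open>p > 0\<close> by (simp add: add_pos_nonneg)
  have prod: "(c + s) * (c - s) = - (p ^ 2)"
    unfolding s_def by (simp add: power2_eq_square algebra_simps add_nonneg_nonneg)
  have "c + s \<noteq> c - s" using \<open>s > 0\<close> by simp
  note geod = geodesic_ideal_pts[OF this]
  have "P \<in> geodesic (ideal_pt (c + s)) (ideal_pt (c - s))"
    using axis_point_on_geodesic_iff[OF P \<open>c + s \<noteq> c - s\<close>] prod unfolding p_def by simp
  moreover have "R \<in> geodesic (ideal_pt (c + s)) (ideal_pt (c - s))"
  proof -
    have "2 * c * y = cmod (chart R) ^ 2 - p ^ 2" unfolding c_def using R(2) unfolding y_def by simp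
    then have "cmod (chart R) ^ 2 - (c + s + (c - s)) * y + (c + s) * (c - s) = 0"
      unfolding prod by (simp add: algebra_simps)
    then show ?thesis unfolding geod using R(1) unfolding y_def by simp
  qed
  ultimately show thesis
    using that hyp_line_geodesic[OF ideal_pt_unit ideal_pt_unit] \<open>c + s \<noteq> c - s\<close>
    unfolding ideal_pt_eq_iff by blast
qed

end

theorem theorem2p1:
  fixes P Q R :: complex and L :: "complex set"
  assumes "P \<in> disk" "Q \<in> disk" "R \<in> disk"
    and noncol: "\<not> (\<exists>L'. hyp_line L' \<and> P \<in> L' \<and> Q \<in> L' \<and> R \<in> L')"
    and L: "hyp_line L" "P \<in> L" "Q \<in> L"
  defines "S \<equiv> {T. circumscribing_ideal_triangle T P Q R}"
    and "h \<equiv> hdist_set R L"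
  shows "finite S \<and>
    card S = (if h < Delta P Q then 0 else if h = Delta P Q then 1 else 2)"
proof -
  obtain e1 e2 where "cmod e1 = 1" "cmod e2 = 1" "e1 \<noteq> e2" and L_eq: "L = geodesic e1 e2"
    using hyp_line_eq_geodesic[OF L(1)] .
  then interpret half_plane_chart e1 e2 by unfold_locales
  have axis: "L = {z \<in> disk. Im (chart z) = 0}" using L_eq geodesic_axis by simp
  have P: "Im (chart P) = 0" and Q: "Im (chart Q) = 0" using L(2,3) axis by auto
  have R: "Im (chart R) \<noteq> 0" using noncol L axis \<open>R \<in> disk\<close> by auto
  have "P \<noteq> Q"
    using hyp_line_through_axis_point[OF \<open>P \<in> disk\<close> P \<open>R \<in> disk\<close> R] noncol by metis
  define K W where "K = cosh (hdist P Q) * Im (chart R)" and "W = cmod (chart R) ^ 2"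
  have "Re (chart R) > 0" using Re_chart_pos \<open>R \<in> disk\<close> by simp
  then have "W > 0" unfolding W_def by (auto simp: complex_eq_iff)
  let ?roots = "{t. t ^ 2 + 2 * K * t + W = 0}"
  have S_eq: "S = ideal_triangle (Re (chart P)) (Re (chart Q)) ` ?roots"
    unfolding S_def K_def W_def
    using circumscribing_ideal_triangles_eq assms(1-3) P Q \<open>P \<noteq> Q\<close> by simp
  have "inj_on (ideal_triangle (Re (chart P)) (Re (chart Q))) ?roots"
    using ideal_triangle_inj_on Re_chart_pos assms(1,2) \<open>W > 0\<close> by simp
  then have "finite S \<and> card S = (if K^2 < W then 0 else if K^2 = W then 1 else 2)"
    unfolding S_eq using card_quadratic_roots[OF \<open>W > 0\<close>, of K] by (simp add: card_image)
  moreover have "h < Delta P Q \<longleftrightarrow> K^2 < W" "h = Delta P Q \<longleftrightarrow> K^2 = W"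
    unfolding h_def axis hdist_set_axis[OF \<open>R \<in> disk\<close>] Delta_eq_log_coth_half K_def W_def
    using arcosh_cmod_div_Re_vs_log_coth_half[OF \<open>Re (chart R) > 0\<close>
        hdist_pos[OF assms(1,2) \<open>P \<noteq> Q\<close>]]
    by simp_all
  ultimately show ?thesis by simp
qed

end
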